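(* Let $0<q<1$ and $t>0$, let $n\ge 0$ be an integer, and let $u\in\mathbb{C}\setminus\{0\}$. Then $$\left|S_n(q^{-nt}u;q)\right|\le \frac{|u|^n\,A_q\!\left(-\frac{q^{n(t-2)}}{|u|}\right)}{(q;q)_\infty\, q^{n^2(t-1)}}.$$
   Context: Notation: $(a;q)_0:=1$, $(a;q)_k:=\prod_{j=0}^{k-1}(1-aq^j)$, $(a;q)_\infty:=\prod_{j=0}^{\infty}(1-aq^j)$. Ramanujan's function is the entire function $A_q(z):=\sum_{k=0}^{\infty}\frac{q^{k^2}}{(q;q)_k}(-z)^k$. The Stieltjes–Wigert polynomials are $S_n(x;q):=\sum_{k=0}^{n}\frac{q^{k^2}(-x)^k}{(q;q)_k(q;q)_{n-k}}$. *)

theory Defs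
  imports "HOL-Analysis.Analysis"
begin

definition qpoch :: "real \<Rightarrow> real \<Rightarrow> nat \<Rightarrow> real" where
  "qpoch a q k = (\<Prod>j<k. (1 - a * q ^ j))"

definition qpoch_inf :: "real \<Rightarrow> real \<Rightarrow> real" where
  "qpoch_inf a q = (\<Prod>j. (1 - a * q ^ j))"

definition ramanujanA :: "real \<Rightarrow> 'a::{real_normed_field,banach} \<Rightarrow> 'a" where
  "ramanujanA q z = (\<Sum>k. of_real (q ^ (k\<^sup>2) / qpoch q q k) * (- z) ^ k)"

definition stieltjes_wigert :: "nat \<Rightarrow> 'a::real_normed_field \<Rightarrow> real \<Rightarrow> 'a" where
  "stieltjes_wigert n x q =
     (\<Sum>k=0..n. of_real (q ^ (k\<^sup>2) / (qpoch q q k * qpoch q q (n - k))) * (- x) ^ k)"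

end

theory Submission
  imports Defs
begin

text \<open>Reverse the summation index, k = n - j. Completing the square in the exponent turns the
  k-th term of S_n(q^(-nt) u) into |u|^n q^(-n^2 (t-1)) q^(j^2) w^j / ((q;q)_j (q;q)_(n-j)) with
  w = q^(n(t-2)) / |u|. Since (q;q)_(n-j) \<ge> (q;q)_\<infinity> > 0, the triangle inequality leaves a
  partial sum of the positive series A_q(-w).\<close>

lemma qpoch_Suc: "qpoch a q (Suc k) = qpoch a q k * (1 - a * q ^ k)"
  by (simp add: qpoch_def)

lemma qpoch_factor_pos:
  fixes a q :: real
  assumes "a < 1" "0 \<le> q" "q \<le> 1"
  shows "0 < 1 - a * q ^ j"
proof (cases "0 \<le> a")
  case True
  then have "a * q ^ j \<le> a"
    using assms by (simp add: mult_left_le power_le_one)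
  then show ?thesis using assms(1) by linarith
next
  case False
  then have "a * q ^ j \<le> 0" using assms by (simp add: mult_nonpos_nonneg)
  then show ?thesis by simp
qed

lemma qpoch_pos:
  assumes "a < 1" "0 \<le> q" "q \<le> 1"
  shows "0 < qpoch a q k"
  unfolding qpoch_def using qpoch_factor_pos[OF assms] by (rule prod_pos)

lemma qpoch_convergent_prod:
  fixes a q :: real
  assumes "\<bar>q\<bar> < 1"
  shows "convergent_prod (\<lambda>j. 1 - a * q ^ j)"
proof -
  have "summable (\<lambda>j. \<bar>a\<bar> * \<bar>q\<bar> ^ j)"
    using assms by (simp add: summable_mult summable_geometric)
  then have "summable (\<lambda>j. norm ((1 - a * q ^ j) - 1))"
    by (simp add: abs_mult power_abs)
  then show ?thesis
    by (intro abs_convergent_prod_imp_convergent_prod summable_imp_abs_convergent_prod)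
qed

lemma qpoch_LIMSEQ:
  assumes "\<bar>q\<bar> < 1"
  shows "(\<lambda>k. qpoch a q k) \<longlonglongrightarrow> qpoch_inf a q"
  using convergent_prod_LIMSEQ[OF qpoch_convergent_prod[OF assms]]
  unfolding qpoch_def qpoch_inf_def lessThan_Suc_atMost[symmetric]
  by (rule LIMSEQ_imp_Suc)

lemma qpoch_inf_pos:
  assumes "a < 1" "0 \<le> q" "q < 1"
  shows "0 < qpoch_inf a q"
  unfolding qpoch_inf_def
proof (rule less_0_prodinf)
  show "convergent_prod (\<lambda>j. 1 - a * q ^ j)"
    using assms by (intro qpoch_convergent_prod) simp
  fix j
  show "0 < 1 - a * q ^ j"
    using assms by (intro qpoch_factor_pos) simp_all
qed

lemma qpoch_inf_le_qpoch:
  assumes "0 \<le> a" "a \<le> 1" "0 \<le> q" "q < 1"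
  shows "qpoch_inf a q \<le> qpoch a q k"
proof (rule decseq_ge)
  show "decseq (\<lambda>k. qpoch a q k)"
  proof (rule decseq_SucI)
    fix k
    have "0 \<le> qpoch a q k"
      unfolding qpoch_def using assms by (intro prod_nonneg) (simp add: mult_le_one power_le_one)
    then show "qpoch a q (Suc k) \<le> qpoch a q k"
      using assms by (simp add: qpoch_Suc mult_left_le)
  qed
  show "(\<lambda>k. qpoch a q k) \<longlonglongrightarrow> qpoch_inf a q"
    using assms by (intro qpoch_LIMSEQ) simp
qed

lemma ramanujanA_summable_norm:
  fixes z :: "'a::real_normed_field"
  assumes "0 \<le> q" "q < 1"
  shows "summable (\<lambda>k. norm (of_real (q ^ k\<^sup>2 / qpoch q q k) * z ^ k))"
proof (rule summable_comparison_test_ev)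
  define Q where "Q = qpoch_inf q q"
  have Q: "0 < Q" "\<And>k. Q \<le> qpoch q q k"
    using assms by (simp_all add: Q_def qpoch_inf_pos qpoch_inf_le_qpoch)
  have "(\<lambda>k. norm z * q ^ k) \<longlonglongrightarrow> norm z * 0"
    using assms by (intro tendsto_mult tendsto_const LIMSEQ_power_zero) auto
  then have "eventually (\<lambda>k. norm z * q ^ k < 1/2) sequentially"
    by (intro order_tendstoD) auto
  then show "eventually (\<lambda>k. norm (norm (of_real (q ^ k\<^sup>2 / qpoch q q k) * z ^ k))
      \<le> (1/2) ^ k / Q) sequentially"
  proof eventually_elim
    case (elim k)
    have qk: "0 < qpoch q q k" using assms by (simp add: qpoch_pos)
    have "norm (norm (of_real (q ^ k\<^sup>2 / qpoch q q k) * z ^ k))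
        = q ^ k\<^sup>2 / qpoch q q k * norm z ^ k"
      unfolding norm_mult norm_power norm_of_real using assms qk by simp
    also have "\<dots> = (norm z * q ^ k) ^ k / qpoch q q k"
      by (simp add: power2_eq_square power_mult power_mult_distrib mult.commute)
    also have "\<dots> \<le> (norm z * q ^ k) ^ k / Q"
      using Q qk assms by (intro divide_left_mono) auto
    also have "\<dots> \<le> (1/2) ^ k / Q"
      using Q assms elim by (intro divide_right_mono power_mono) auto
    finally show ?case .
  qed
  show "summable (\<lambda>k. (1/2) ^ k / Q :: real)"
    by (intro summable_divide summable_geometric) simp
qed

lemma sum_le_ramanujanA:
  assumes "0 \<le> q" "q < 1" "0 \<le> w" "finite K"
  shows "(\<Sum>k\<in>K. q ^ k\<^sup>2 / qpoch q q k * w ^ k) \<le> ramanujanA q (- w)"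
proof -
  have pos: "0 < qpoch q q k" for k
    using assms by (simp add: qpoch_pos)
  then have "summable (\<lambda>k. q ^ k\<^sup>2 / qpoch q q k * w ^ k)"
    using ramanujanA_summable_norm[OF assms(1,2), of w] assms by (simp add: abs_mult abs_of_pos)
  then have "(\<Sum>k\<in>K. q ^ k\<^sup>2 / qpoch q q k * w ^ k) \<le> (\<Sum>k. q ^ k\<^sup>2 / qpoch q q k * w ^ k)"
    using assms pos by (intro sum_le_suminf) (auto intro!: divide_nonneg_pos)
  then show ?thesis
    unfolding ramanujanA_def by simp
qed

lemma norm_stieltjes_wigert_le:
  fixes x :: "'a::real_normed_field"
  assumes "0 \<le> q" "q < 1"
  shows "norm (stieltjes_wigert n x q)
    \<le> (\<Sum>j\<le>n. q ^ (n - j)\<^sup>2 * norm x ^ (n - j) / qpoch q q j) / qpoch_inf q q"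
proof -
  define Q where "Q = qpoch_inf q q"
  have Q: "0 < Q" "\<And>k. Q \<le> qpoch q q k"
    using assms by (simp_all add: Q_def qpoch_inf_pos qpoch_inf_le_qpoch)
  have pos: "\<And>k. 0 < qpoch q q k"
    using assms by (simp add: qpoch_pos)
  have "norm (stieltjes_wigert n x q)
      \<le> (\<Sum>k\<le>n. norm (of_real (q ^ k\<^sup>2 / (qpoch q q k * qpoch q q (n - k))) * (- x) ^ k))"
    unfolding stieltjes_wigert_def atLeast0AtMost by (rule norm_sum)
  also have "\<dots> = (\<Sum>k\<le>n. q ^ k\<^sup>2 / (qpoch q q k * qpoch q q (n - k)) * norm x ^ k)"
    unfolding norm_mult norm_power norm_minus_cancel norm_of_real
    using assms pos by (simp add: abs_mult abs_of_pos)
  also have "\<dots> = (\<Sum>j\<le>n. q ^ (n - j)\<^sup>2 / (qpoch q q (n - j) * qpoch q q j) * norm x ^ (n - j))"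
    by (rule sum.reindex_bij_witness[of _ "\<lambda>j. n - j" "\<lambda>j. n - j"]) auto
  also have "\<dots> \<le> (\<Sum>j\<le>n. q ^ (n - j)\<^sup>2 / (Q * qpoch q q j) * norm x ^ (n - j))"
    using Q pos assms
    by (intro sum_mono mult_right_mono divide_left_mono mult_right_mono mult_pos_pos)
      (auto intro: less_imp_le)
  also have "\<dots> = (\<Sum>j\<le>n. q ^ (n - j)\<^sup>2 * norm x ^ (n - j) / qpoch q q j) / Q"
    by (simp add: sum_divide_distrib mult.commute)
  finally show ?thesis
    unfolding Q_def .
qed

lemma power_mult_powr_power:
  fixes q c :: real
  assumes "0 < q"
  shows "q ^ m * (q powr c) ^ k = q powr (real m + real k * c)"
  using assms by (simp add: powr_add powr_realpow powr_power mult.commute)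

lemma reflected_gaussian_term_eq:
  fixes q a t :: real
  assumes "0 < q" "0 < a" "j \<le> n"
  shows "q ^ (n - j)\<^sup>2 * (q powr (- (real n * t)) * a) ^ (n - j)
    = a ^ n * (q ^ j\<^sup>2 * (q powr (real n * (t - 2)) / a) ^ j) / q powr ((real n)\<^sup>2 * (t - 1))"
proof -
  have exponent: "real ((n - j)\<^sup>2) + real (n - j) * (- (real n * t))
      = real (j\<^sup>2) + real j * (real n * (t - 2)) - (real n)\<^sup>2 * (t - 1)"
  proof -
    obtain k where "n = j + k" using assms(3) le_Suc_ex by blast
    then show ?thesis by (simp add: power2_eq_square algebra_simps)
  qed
  have "q ^ (n - j)\<^sup>2 * (q powr (- (real n * t))) ^ (n - j)
      = q powr (real ((n - j)\<^sup>2) + real (n - j) * (- (real n * t)))"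
    using assms(1) by (rule power_mult_powr_power)
  also have "\<dots> = q powr (real (j\<^sup>2) + real j * (real n * (t - 2))) / q powr ((real n)\<^sup>2 * (t - 1))"
    unfolding exponent powr_diff ..
  also have "\<dots> = q ^ j\<^sup>2 * (q powr (real n * (t - 2))) ^ j / q powr ((real n)\<^sup>2 * (t - 1))"
    unfolding power_mult_powr_power[OF assms(1)] ..
  finally have q_part: "q ^ (n - j)\<^sup>2 * (q powr (- (real n * t))) ^ (n - j)
      = q ^ j\<^sup>2 * (q powr (real n * (t - 2))) ^ j / q powr ((real n)\<^sup>2 * (t - 1))" .
  have a_part: "a ^ (n - j) = a ^ n / a ^ j"
    using assms by (simp add: power_diff)
  have "q ^ (n - j)\<^sup>2 * (q powr (- (real n * t)) * a) ^ (n - j)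
      = q ^ (n - j)\<^sup>2 * (q powr (- (real n * t))) ^ (n - j) * a ^ (n - j)"
    by (simp only: power_mult_distrib mult.assoc)
  also have "\<dots> = q ^ j\<^sup>2 * (q powr (real n * (t - 2))) ^ j / q powr ((real n)\<^sup>2 * (t - 1))
      * (a ^ n / a ^ j)"
    unfolding q_part a_part ..
  finally show ?thesis
    by (simp add: power_divide ac_simps)
qed

theorem mainTheorem2:
  fixes q t :: real and n :: nat and u :: complex
  assumes "0 < q" "q < 1" "0 < t" "u \<noteq> 0"
  shows "cmod (stieltjes_wigert n (of_real (q powr (- (real n * t))) * u) q)
         \<le> cmod u ^ n * ramanujanA q (- (q powr (real n * (t - 2)) / cmod u))
           / (qpoch_inf q q * q powr ((real n)\<^sup>2 * (t - 1)))"
proof -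
  define c where "c = q powr (- (real n * t))"
  define w where "w = q powr (real n * (t - 2)) / cmod u"
  define D where "D = q powr ((real n)\<^sup>2 * (t - 1))"
  define Q where "Q = qpoch_inf q q"
  have "cmod (stieltjes_wigert n (of_real c * u) q)
      \<le> (\<Sum>j\<le>n. q ^ (n - j)\<^sup>2 * (c * cmod u) ^ (n - j) / qpoch q q j) / Q"
    using norm_stieltjes_wigert_le[of q n "of_real c * u"] assms
    by (simp add: Q_def norm_mult c_def)
  also have "\<dots> = cmod u ^ n / D * (\<Sum>j\<le>n. q ^ j\<^sup>2 / qpoch q q j * w ^ j) / Q"
    unfolding sum_distrib_left c_def w_def D_def
    using assms by (intro arg_cong[where f = "\<lambda>x. x / Q"] sum.cong refl)
      (simp add: reflected_gaussian_term_eq)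
  also have "\<dots> \<le> cmod u ^ n / D * ramanujanA q (- w) / Q"
    using assms by (intro divide_right_mono mult_left_mono sum_le_ramanujanA)
      (simp_all add: w_def D_def Q_def qpoch_inf_pos less_imp_le)
  finally show ?thesis
    by (simp add: c_def w_def D_def Q_def ac_simps)
qed

end
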